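(* Let $G$ be a compact group such that $G/Z(G)$ is a $p$-group of order $p^k$, where $p$ is a prime and $k\ge2$ is an integer. Then $d(G)\le \dfrac{p^k+p-1}{p^{k+1}}$, and equality holds if $G$ is isoclinic to an extra-special $p$-group of order $p^{k+1}$.
   Context: For a compact group $G$, $\mu_G$ is its normalized Haar measure and the commutativity degree is $d(G)=(\mu_G\times\mu_G)(\{(x,y)\in G\times G: xy=yx\})$. Two groups $G_1,G_2$ are isoclinic if there are isomorphisms $\alpha:G_1/Z(G_1)\to G_2/Z(G_2)$ and $\beta:G_1'\to G_2'$ (derived subgroups) with $\beta([x,y])=[x',y']$ whenever $x'Z(G_2)=\alpha(xZ(G_1))$ and $y'Z(G_2)=\alpha(yZ(G_1))$; here $[x,y]=x^{-1}y^{-1}xy$ (for a compact $G$ the isomorphisms are taken as isomorphisms of topological groups, finite groups being discrete). *)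

theory Defs
  imports "HOL-Analysis.Analysis" "HOL-Probability.Probability" "HOL-Algebra.Algebra"
begin

definition center :: "('a, 'b) monoid_scheme \<Rightarrow> 'a set" where
  "center G = {z \<in> carrier G. \<forall>x \<in> carrier G. z \<otimes>\<^bsub>G\<^esub> x = x \<otimes>\<^bsub>G\<^esub> z}"

definition commutator :: "('a, 'b) monoid_scheme \<Rightarrow> 'a \<Rightarrow> 'a \<Rightarrow> 'a" where
  "commutator G x y = inv\<^bsub>G\<^esub> x \<otimes>\<^bsub>G\<^esub> inv\<^bsub>G\<^esub> y \<otimes>\<^bsub>G\<^esub> x \<otimes>\<^bsub>G\<^esub> y"

definition compact_group :: "('a, 'b) monoid_scheme \<Rightarrow> 'a topology \<Rightarrow> bool" where
  "compact_group G T \<longleftrightarrow> group G \<and> topspace T = carrier G \<and> compact_space T \<and>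
     Hausdorff_space T \<and>
     continuous_map (prod_topology T T) T (\<lambda>(x, y). x \<otimes>\<^bsub>G\<^esub> y) \<and>
     continuous_map T T (\<lambda>x. inv\<^bsub>G\<^esub> x)"

definition borel_of_top :: "'a topology \<Rightarrow> 'a measure" where
  "borel_of_top T = sigma (topspace T) {U. openin T U}"

definition haar_measure :: "('a, 'b) monoid_scheme \<Rightarrow> 'a topology \<Rightarrow> 'a measure \<Rightarrow> bool" where
  "haar_measure G T M \<longleftrightarrow>
     space M = topspace T \<and> sets M = sets (borel_of_top T) \<and> prob_space M \<and>
     (\<forall>g \<in> carrier G. \<forall>A \<in> sets M. measure M ((\<lambda>x. g \<otimes>\<^bsub>G\<^esub> x) ` A) = measure M A) \<and>
     (\<forall>A \<in> sets M. measure M A = (INF U \<in> {U. openin T U \<and> A \<subseteq> U}. measure M U)) \<and>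
     (\<forall>A \<in> sets M. measure M A = (SUP K \<in> {K. compactin T K \<and> K \<subseteq> A}. measure M K))"

text \<open>Commutativity degree of G, computed with the normalized Haar measure \<nu> of G \<times> G
  (which is the product mu_G \<times> mu_G).\<close>
definition comm_degree :: "('a, 'b) monoid_scheme \<Rightarrow> ('a \<times> 'a) measure \<Rightarrow> real" where
  "comm_degree G \<nu> = measure \<nu> {(x, y) \<in> carrier G \<times> carrier G. x \<otimes>\<^bsub>G\<^esub> y = y \<otimes>\<^bsub>G\<^esub> x}"

definition isoclinic :: "('a, 'b) monoid_scheme \<Rightarrow> ('c, 'd) monoid_scheme \<Rightarrow> bool" where
  "isoclinic G H \<longleftrightarrow>
     (\<exists>\<alpha> \<beta>. \<alpha> \<in> iso (G Mod center G) (H Mod center H) \<and>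
       \<beta> \<in> iso (G\<lparr>carrier := derived G (carrier G)\<rparr>) (H\<lparr>carrier := derived H (carrier H)\<rparr>) \<and>
       (\<forall>x \<in> carrier G. \<forall>y \<in> carrier G. \<forall>x' \<in> carrier H. \<forall>y' \<in> carrier H.
          \<alpha> (center G #>\<^bsub>G\<^esub> x) = center H #>\<^bsub>H\<^esub> x' \<and>
          \<alpha> (center G #>\<^bsub>G\<^esub> y) = center H #>\<^bsub>H\<^esub> y' \<longrightarrow>
          \<beta> (commutator G x y) = commutator H x' y'))"

text \<open>Extra-special p-group: finite p-group P with Z(P) = P' of order p and P/Z(P)
  elementary abelian (so Z(P) = P' = Frattini(P)).\<close>
definition extraspecial :: "nat \<Rightarrow> ('a, 'b) monoid_scheme \<Rightarrow> bool" where
  "extraspecial p P \<longleftrightarrow> group P \<and> Factorial_Ring.prime p \<and> finite (carrier P) \<and>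
     (\<exists>n. order P = p ^ n) \<and>
     center P = derived P (carrier P) \<and> card (center P) = p \<and>
     (\<forall>x \<in> carrier P. x [^]\<^bsub>P\<^esub> p \<in> center P)"

end

theory Submission
  imports Defs
begin

(* Whether two elements of G commute depends only on their cosets modulo the
   centre Z = Z(G).  Hence the commuting set {(x, y). xy = yx} is a disjoint union of boxes
   C \<times> D of Z-cosets, all of equal Haar measure by left invariance, and so
     d(G) = #(commuting coset pairs) / |G/Z|^2.
   Count the pairs fibrewise over the first coset C.  The central coset commutes with all p^k
   cosets.  For x \<notin> Z the cosets commuting with Zx form the image of the centralizer C(x) in
   G/Z, a proper subgroup of a group of order p^k, hence of size at most p^(k-1); this gives
   #pairs \<le> p^k + (p^k - 1) p^(k-1), which is the stated bound.  In an extra-special group H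
   of order p^(k+1) the map y \<mapsto> [x,y] takes values in H' = Z(H) of order p and its fibres are
   cosets of C(x), so |H : C(x)| \<le> p and every such fibre has exactly p^(k-1) elements.  An
   isoclinism identifies G/Z(G) with H/Z(H) compatibly with commutators, so it preserves the
   commuting coset pairs, and G attains the bound as well. *)

definition centralizer :: "('a, 'b) monoid_scheme \<Rightarrow> 'a set \<Rightarrow> 'a set" where
  "centralizer G S = {y \<in> carrier G. \<forall>s \<in> S. s \<otimes>\<^bsub>G\<^esub> y = y \<otimes>\<^bsub>G\<^esub> s}"

definition commuting_cosets :: "('a, 'b) monoid_scheme \<Rightarrow> 'a set \<Rightarrow> 'a set set" where
  "commuting_cosets G C = {D \<in> rcosets\<^bsub>G\<^esub> (center G). \<forall>x \<in> C. \<forall>y \<in> D. x \<otimes>\<^bsub>G\<^esub> y = y \<otimes>\<^bsub>G\<^esub> x}"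

definition commuting_coset_pairs :: "('a, 'b) monoid_scheme \<Rightarrow> ('a set \<times> 'a set) set" where
  "commuting_coset_pairs G = (SIGMA C : rcosets\<^bsub>G\<^esub> (center G). commuting_cosets G C)"

lemma card_image_le_if_factors:
  assumes "finite A" and "\<And>a b. a \<in> A \<Longrightarrow> b \<in> A \<Longrightarrow> f a = f b \<Longrightarrow> g a = g b"
  shows "card (g ` A) \<le> card (f ` A)"
proof -
  have "g ` A \<subseteq> (\<lambda>v. g (inv_into A f v)) ` (f ` A)"
  proof
    fix u assume "u \<in> g ` A"
    then obtain a where a: "a \<in> A" "u = g a" by blast
    have fa: "f a \<in> f ` A" using a(1) by (rule imageI)
    have "g (inv_into A f (f a)) = g a"
      using assms(2) inv_into_into[OF fa] f_inv_into_f[OF fa] a(1) by blast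
    then show "u \<in> (\<lambda>v. g (inv_into A f v)) ` (f ` A)" using a fa by (metis image_eqI)
  qed
  then show ?thesis using surj_card_le finite_imageI[OF assms(1)] by blast
qed

context group
begin

lemma center_eq_centralizer: "center G = centralizer G (carrier G)"
  unfolding center_def centralizer_def by auto

lemma center_subset: "center G \<subseteq> carrier G"
  by (auto simp: center_def)

lemma center_commute: "z \<in> center G \<Longrightarrow> y \<in> carrier G \<Longrightarrow> z \<otimes> y = y \<otimes> z"
  by (auto simp: center_def)

lemma centralizer_subgroup:
  assumes S: "S \<subseteq> carrier G"
  shows "subgroup (centralizer G S) G"
proof
  show "centralizer G S \<subseteq> carrier G" by (auto simp: centralizer_def)
  show "\<one> \<in> centralizer G S" using S by (auto simp: centralizer_def)
next
  fix a b assume a: "a \<in> centralizer G S" and b: "b \<in> centralizer G S"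
  have ac: "a \<in> carrier G" and bc: "b \<in> carrier G" using a b by (auto simp: centralizer_def)
  have "s \<otimes> (a \<otimes> b) = (a \<otimes> b) \<otimes> s" if s: "s \<in> S" for s
  proof -
    have sc: "s \<in> carrier G" using s S by blast
    have "s \<otimes> (a \<otimes> b) = (s \<otimes> a) \<otimes> b" using sc ac bc by (simp add: m_assoc)
    also have "\<dots> = a \<otimes> (s \<otimes> b)" using a s sc ac bc by (simp add: centralizer_def m_assoc)
    also have "\<dots> = (a \<otimes> b) \<otimes> s" using b s sc ac bc by (simp add: centralizer_def m_assoc)
    finally show ?thesis .
  qed
  then show "a \<otimes> b \<in> centralizer G S" using ac bc by (simp add: centralizer_def)
next
  fix a assume a: "a \<in> centralizer G S"
  have ac: "a \<in> carrier G" using a by (simp add: centralizer_def)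
  have "s \<otimes> inv a = inv a \<otimes> s" if s: "s \<in> S" for s
  proof -
    have sc: "s \<in> carrier G" using s S by blast
    have "s \<otimes> inv a = inv a \<otimes> (a \<otimes> s) \<otimes> inv a" using sc ac by (simp add: m_assoc[symmetric])
    also have "\<dots> = inv a \<otimes> (s \<otimes> a) \<otimes> inv a" using a s by (simp add: centralizer_def)
    also have "\<dots> = inv a \<otimes> s" using sc ac by (simp add: m_assoc)
    finally show ?thesis .
  qed
  then show "inv a \<in> centralizer G S" using ac by (simp add: centralizer_def)
qed

lemma center_subgroup: "subgroup (center G) G"
  unfolding center_eq_centralizer by (rule centralizer_subgroup) simp

lemma l_coset_center: "x \<in> carrier G \<Longrightarrow> x <# center G = center G #> x"
  unfolding l_coset_def r_coset_def using center_commute by force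

lemma center_normal: "center G \<lhd> G"
  by (rule normalI[OF center_subgroup]) (simp add: l_coset_center)

lemma commute_rcos_center_iff:
  assumes a: "a \<in> carrier G" and b: "b \<in> carrier G"
    and x: "x \<in> center G #> a" and y: "y \<in> center G #> b"
  shows "x \<otimes> y = y \<otimes> x \<longleftrightarrow> a \<otimes> b = b \<otimes> a"
proof -
  obtain z where z: "z \<in> center G" "x = z \<otimes> a" using x by (auto simp: r_coset_def)
  obtain w where w: "w \<in> center G" "y = w \<otimes> b" using y by (auto simp: r_coset_def)
  have zc: "z \<in> carrier G" "w \<in> carrier G" using z w center_subset by auto
  have xy: "x \<otimes> y = (z \<otimes> w) \<otimes> (a \<otimes> b)"
  proof -
    have "x \<otimes> y = z \<otimes> ((a \<otimes> w) \<otimes> b)" using z w zc a b by (simp add: m_assoc)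
    also have "\<dots> = z \<otimes> ((w \<otimes> a) \<otimes> b)" using center_commute[OF w(1) a] by simp
    also have "\<dots> = (z \<otimes> w) \<otimes> (a \<otimes> b)" using zc a b by (simp add: m_assoc)
    finally show ?thesis .
  qed
  have yx: "y \<otimes> x = (z \<otimes> w) \<otimes> (b \<otimes> a)"
  proof -
    have "y \<otimes> x = w \<otimes> ((b \<otimes> z) \<otimes> a)" using z w zc a b by (simp add: m_assoc)
    also have "\<dots> = w \<otimes> ((z \<otimes> b) \<otimes> a)" using center_commute[OF z(1) b] by simp
    also have "\<dots> = (w \<otimes> z) \<otimes> (b \<otimes> a)" using zc a b by (simp add: m_assoc)
    also have "\<dots> = (z \<otimes> w) \<otimes> (b \<otimes> a)" using center_commute[OF z(1) zc(2)] by simp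
    finally show ?thesis .
  qed
  show ?thesis unfolding xy yx using zc a b by simp
qed

lemma commutator_eq_one_iff:
  assumes x: "x \<in> carrier G" and y: "y \<in> carrier G"
  shows "commutator G x y = \<one> \<longleftrightarrow> x \<otimes> y = y \<otimes> x"
proof -
  have yx: "y \<otimes> x \<in> carrier G" and xy: "x \<otimes> y \<in> carrier G" using x y by auto
  have "commutator G x y = inv (y \<otimes> x) \<otimes> (x \<otimes> y)"
    unfolding commutator_def using x y by (simp add: inv_mult_group m_assoc)
  also have "\<dots> = \<one> \<longleftrightarrow> x \<otimes> y = y \<otimes> x"
    using Units_l_cancel[of "inv (y \<otimes> x)" "x \<otimes> y" "y \<otimes> x"] xy yx by simp
  finally show ?thesis .
qed

lemma commutator_in_derived:
  assumes x: "x \<in> carrier G" and y: "y \<in> carrier G"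
  shows "commutator G x y \<in> derived G (carrier G)"
proof -
  have "commutator G x y = inv x \<otimes> inv y \<otimes> inv (inv x) \<otimes> inv (inv y)"
    using x y by (simp add: commutator_def)
  moreover have "inv x \<in> carrier G" "inv y \<in> carrier G" using x y by auto
  ultimately have "commutator G x y \<in> derived_set G (carrier G)" by blast
  then show ?thesis unfolding derived_def by (rule generate.incl)
qed

lemma rcosets_center_subset: "C \<in> rcosets (center G) \<Longrightarrow> C \<subseteq> carrier G"
  using subgroup.rcosets_carrier[OF center_subgroup is_group] by blast

lemma center_in_rcosets: "center G \<in> rcosets (center G)"
  by (rule subgroup.subgroup_in_rcosets[OF center_subgroup is_group])

lemma rcosets_center_noncentral:
  assumes "C \<in> rcosets (center G)" "C \<noteq> center G"
  obtains x where "x \<in> carrier G" "x \<notin> center G" "C = center G #> x"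
proof -
  obtain x where x: "x \<in> carrier G" "C = center G #> x" using assms(1) unfolding RCOSETS_def by blast
  have "x \<notin> center G" using coset_join2[OF x(1) center_subgroup] x assms(2) by blast
  then show ?thesis using x that by blast
qed

lemma commuting_coset_pairs_rcos_iff:
  assumes a: "a \<in> carrier G" and b: "b \<in> carrier G"
  shows "(center G #> a, center G #> b) \<in> commuting_coset_pairs G \<longleftrightarrow> a \<otimes> b = b \<otimes> a"
proof
  assume "(center G #> a, center G #> b) \<in> commuting_coset_pairs G"
  then have "\<forall>u \<in> center G #> a. \<forall>v \<in> center G #> b. u \<otimes> v = v \<otimes> u"
    unfolding commuting_coset_pairs_def commuting_cosets_def by blast
  then show "a \<otimes> b = b \<otimes> a"
    using rcos_self[OF a center_subgroup] rcos_self[OF b center_subgroup] by blast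
next
  assume "a \<otimes> b = b \<otimes> a"
  then have "\<forall>u \<in> center G #> a. \<forall>v \<in> center G #> b. u \<otimes> v = v \<otimes> u"
    using commute_rcos_center_iff[OF a b] by blast
  then show "(center G #> a, center G #> b) \<in> commuting_coset_pairs G"
    using rcosetsI[OF center_subset a] rcosetsI[OF center_subset b]
    unfolding commuting_coset_pairs_def commuting_cosets_def by blast
qed

lemma commuting_cosets_center: "commuting_cosets G (center G) = rcosets (center G)"
proof -
  have "\<forall>x \<in> center G. \<forall>y \<in> D. x \<otimes> y = y \<otimes> x" if "D \<in> rcosets (center G)" for D
    using center_commute rcosets_center_subset[OF that] by blast
  then show ?thesis by (auto simp: commuting_cosets_def)
qed

lemma commuting_cosets_rcos:
  assumes x: "x \<in> carrier G"
  shows "commuting_cosets G (center G #> x) = (\<lambda>a. center G #> a) ` centralizer G {x}"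
proof (intro equalityI subsetI)
  fix D assume D: "D \<in> commuting_cosets G (center G #> x)"
  then obtain b where b: "b \<in> carrier G" "D = center G #> b"
    unfolding commuting_cosets_def RCOSETS_def by blast
  have "x \<otimes> b = b \<otimes> x"
    using D b rcos_self[OF b(1) center_subgroup] rcos_self[OF x center_subgroup]
    unfolding commuting_cosets_def by blast
  then show "D \<in> (\<lambda>a. center G #> a) ` centralizer G {x}"
    using b by (auto simp: centralizer_def)
next
  fix D assume "D \<in> (\<lambda>a. center G #> a) ` centralizer G {x}"
  then obtain b where b: "b \<in> carrier G" "x \<otimes> b = b \<otimes> x" "D = center G #> b"
    by (auto simp: centralizer_def)
  then have "\<forall>u \<in> center G #> x. \<forall>v \<in> D. u \<otimes> v = v \<otimes> u"
    using commute_rcos_center_iff[OF x b(1)] by blast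
  then show "D \<in> commuting_cosets G (center G #> x)"
    using rcosetsI[OF center_subset b(1)] b(3) by (simp add: commuting_cosets_def)
qed

lemma card_commuting_coset_pairs:
  assumes fin: "finite (rcosets (center G))"
  shows "card (commuting_coset_pairs G) = card (rcosets (center G))
           + (\<Sum>C \<in> rcosets (center G) - {center G}. card (commuting_cosets G C))"
proof -
  have "finite (commuting_cosets G C)" for C
    using fin by (rule finite_subset[rotated]) (auto simp: commuting_cosets_def)
  then have "card (commuting_coset_pairs G) = (\<Sum>C \<in> rcosets (center G). card (commuting_cosets G C))"
    unfolding commuting_coset_pairs_def using fin by (simp add: card_SigmaI)
  also have "\<dots> = card (commuting_cosets G (center G))
                   + (\<Sum>C \<in> rcosets (center G) - {center G}. card (commuting_cosets G C))"
    using fin center_in_rcosets by (simp add: sum.remove)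
  finally show ?thesis by (simp add: commuting_cosets_center)
qed

lemma card_commuting_coset_pairs_le:
  assumes fin: "finite (rcosets (center G))"
    and bound: "\<And>x. x \<in> carrier G \<Longrightarrow> x \<notin> center G \<Longrightarrow> card (commuting_cosets G (center G #> x)) \<le> m"
  shows "card (commuting_coset_pairs G) \<le> card (rcosets (center G)) + (card (rcosets (center G)) - 1) * m"
proof -
  have "(\<Sum>C \<in> rcosets (center G) - {center G}. card (commuting_cosets G C))
          \<le> (\<Sum>C \<in> rcosets (center G) - {center G}. m)"
  proof (rule sum_mono)
    fix C assume "C \<in> rcosets (center G) - {center G}"
    then obtain x where "x \<in> carrier G" "x \<notin> center G" "C = center G #> x"
      using rcosets_center_noncentral by blast
    then show "card (commuting_cosets G C) \<le> m" using bound by simp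
  qed
  then show ?thesis
    using fin center_in_rcosets by (simp add: card_commuting_coset_pairs card_Diff_singleton)
qed

lemma card_commuting_coset_pairs_eq:
  assumes fin: "finite (rcosets (center G))"
    and fibre: "\<And>x. x \<in> carrier G \<Longrightarrow> x \<notin> center G \<Longrightarrow> card (commuting_cosets G (center G #> x)) = m"
  shows "card (commuting_coset_pairs G) = card (rcosets (center G)) + (card (rcosets (center G)) - 1) * m"
proof -
  have "(\<Sum>C \<in> rcosets (center G) - {center G}. card (commuting_cosets G C))
          = (\<Sum>C \<in> rcosets (center G) - {center G}. m)"
  proof (rule sum.cong[OF refl])
    fix C assume "C \<in> rcosets (center G) - {center G}"
    then obtain x where "x \<in> carrier G" "x \<notin> center G" "C = center G #> x"
      using rcosets_center_noncentral by blast
    then show "card (commuting_cosets G C) = m" using fibre by simp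
  qed
  then show ?thesis
    using fin center_in_rcosets by (simp add: card_commuting_coset_pairs card_Diff_singleton)
qed

lemma card_proper_subgroup_prime_power:
  assumes p: "Factorial_Ring.prime (p::nat)" and ord: "order G = p ^ k"
    and H: "subgroup H G" and proper: "H \<noteq> carrier G"
  shows "card H \<le> p ^ (k - 1)"
proof -
  have p1: "p > 1" using p prime_gt_1_nat by blast
  have fin: "finite (carrier G)" using ord p1 unfolding order_def by (intro card_ge_0_finite) simp
  have "card H dvd p ^ k" using lagrange[OF H] ord by (metis dvd_triv_right)
  then obtain j where j: "j \<le> k" "card H = p ^ j" using divides_primepow_nat[OF p] by blast
  have "card H < card (carrier G)"
    using proper subgroup.subset[OF H] fin by (simp add: psubset_card_mono psubset_eq)
  then have "p ^ j < p ^ k" using j ord by (simp add: order_def)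
  then have "j < k" using p1 by (simp add: power_strict_increasing_iff)
  then show ?thesis using j p1 by (simp add: power_increasing)
qed

text \<open>Bound for p-groups: if |G/Z| = p^k, a non-central coset commutes with at most p^(k-1) cosets,
  since these form a proper subgroup of G/Z.\<close>
lemma card_commuting_cosets_le:
  assumes p: "Factorial_Ring.prime (p::nat)" and ord: "order (G Mod center G) = p ^ k"
    and x: "x \<in> carrier G" and noncentral: "x \<notin> center G"
  shows "card (commuting_cosets G (center G #> x)) \<le> p ^ (k - 1)"
proof -
  interpret Z: normal "center G" G by (rule center_normal)
  have hom: "group_hom G (G Mod center G) (\<lambda>a. center G #> a)"
    using Z.r_coset_hom_Mod Z.factorgroup_is_group
    by (simp add: group_hom_def group_hom_axioms_def is_group)
  have sub: "subgroup (commuting_cosets G (center G #> x)) (G Mod center G)"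
    unfolding commuting_cosets_rcos[OF x]
    using group_hom.subgroup_img_is_subgroup[OF hom centralizer_subgroup] x by simp
  obtain g where g: "g \<in> carrier G" "x \<otimes> g \<noteq> g \<otimes> x"
    using x noncentral unfolding center_def by blast
  have "center G #> g \<notin> commuting_cosets G (center G #> x)"
    using g commuting_coset_pairs_rcos_iff[OF x g(1)] rcosetsI[OF center_subset x]
    by (simp add: commuting_coset_pairs_def)
  moreover have "center G #> g \<in> carrier (G Mod center G)"
    using g by (simp add: FactGroup_def rcosetsI[OF center_subset])
  ultimately show ?thesis
    using group.card_proper_subgroup_prime_power[OF Z.factorgroup_is_group p ord sub] by blast
qed

lemma commutator_eq_imp_centralizer:
  assumes x: "x \<in> carrier G" and y1: "y1 \<in> carrier G" and y2: "y2 \<in> carrier G"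
    and e: "commutator G x y1 = commutator G x y2"
  shows "y2 \<otimes> inv y1 \<in> centralizer G {x}"
proof -
  have "inv x \<otimes> (inv y1 \<otimes> x \<otimes> y1) = inv x \<otimes> (inv y2 \<otimes> x \<otimes> y2)"
    using e x y1 y2 by (simp add: commutator_def m_assoc)
  then have conj: "inv y1 \<otimes> x \<otimes> y1 = inv y2 \<otimes> x \<otimes> y2"
    using x y1 y2 by simp
  have "y2 \<otimes> inv y1 \<otimes> x = y2 \<otimes> (inv y1 \<otimes> x \<otimes> y1) \<otimes> inv y1"
    using x y1 y2 by (simp add: m_assoc)
  also have "\<dots> = y2 \<otimes> (inv y2 \<otimes> x \<otimes> y2) \<otimes> inv y1" using conj by simp
  also have "\<dots> = x \<otimes> (y2 \<otimes> inv y1)" using x y1 y2 by (simp add: m_assoc) (simp add: m_assoc[symmetric])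
  finally show ?thesis using y1 y2 by (simp add: centralizer_def)
qed

text \<open>In a finite group, the index of a centralizer is at most the order of the derived subgroup,
  because y \<mapsto> [x,y] separates the cosets of C(x) and takes values in G'.\<close>
lemma card_rcosets_centralizer_le:
  assumes fin: "finite (carrier G)" and x: "x \<in> carrier G"
  shows "card (rcosets (centralizer G {x})) \<le> card (derived G (carrier G))"
proof -
  let ?K = "centralizer G {x}"
  have K: "subgroup ?K G" using centralizer_subgroup x by simp
  have cosets: "rcosets ?K = (\<lambda>y. ?K #> y) ` carrier G" unfolding RCOSETS_def by blast
  have "card (rcosets ?K) \<le> card ((\<lambda>y. commutator G x y) ` carrier G)"
    unfolding cosets
  proof (rule card_image_le_if_factors[OF fin])
    fix a b assume a: "a \<in> carrier G" and b: "b \<in> carrier G"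
      and "commutator G x a = commutator G x b"
    then have "b \<in> ?K #> a"
      using commutator_eq_imp_centralizer[OF x] subgroup.rcos_module_rev[OF K is_group a b] by blast
    then show "?K #> a = ?K #> b" using repr_independence[OF _ a K] by blast
  qed
  also have "\<dots> \<le> card (derived G (carrier G))"
  proof (rule card_mono)
    show "finite (derived G (carrier G))"
      using finite_subset[OF derived_in_carrier fin] by simp
    show "(\<lambda>y. commutator G x y) ` carrier G \<subseteq> derived G (carrier G)"
      using commutator_in_derived x by blast
  qed
  finally show ?thesis .
qed

text \<open>A subgroup containing Z is covered by its own Z-cosets, so |K| \<le> #(Z-cosets in K) \<cdot> |Z|.\<close>
lemma card_centralizer_le:
  assumes fin: "finite (carrier G)" and x: "x \<in> carrier G"
  shows "card (centralizer G {x}) \<le> card (commuting_cosets G (center G #> x)) * card (center G)"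
proof -
  let ?K = "centralizer G {x}" and ?S = "(\<lambda>a. center G #> a) ` centralizer G {x}"
  have K: "?K \<subseteq> carrier G" by (auto simp: centralizer_def)
  have "?K \<subseteq> \<Union> ?S" using rcos_self[OF _ center_subgroup] K by blast
  moreover have "\<Union> ?S \<subseteq> carrier G" using K r_coset_subset_G[OF center_subset] by blast
  then have "finite (\<Union> ?S)" using finite_subset fin by blast
  ultimately have "card ?K \<le> card (\<Union> ?S)" by (simp add: card_mono)
  also have "\<dots> \<le> sum card ?S" by (rule card_Union_le_sum_card)
  also have "\<dots> = sum (\<lambda>_. card (center G)) ?S"
  proof (rule sum.cong[OF refl])
    fix D assume "D \<in> ?S"
    then have "D \<in> rcosets (center G)" using K rcosetsI[OF center_subset] by blast
    then show "card D = card (center G)" using card_rcosets_equal[OF _ center_subset] by simp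
  qed
  finally show ?thesis by (simp add: commuting_cosets_rcos[OF x])
qed

text \<open>Extra-special case: if G' = Z has order p and |G| = p^(k+1), every non-central coset commutes
  with at least p^(k-1) cosets, since |G : C(x)| \<le> |G'| = p.\<close>
lemma card_commuting_cosets_ge:
  assumes fin: "finite (carrier G)" and p: "Factorial_Ring.prime (p::nat)"
    and derived: "center G = derived G (carrier G)" and card_center: "card (center G) = p"
    and ord: "order G = p ^ (k + 1)" and k: "k \<ge> 1" and x: "x \<in> carrier G"
  shows "p ^ (k - 1) \<le> card (commuting_cosets G (center G #> x))"
proof -
  let ?K = "centralizer G {x}" and ?S = "commuting_cosets G (center G #> x)"
  have p0: "p > 0" using p prime_gt_0_nat by blast
  have index: "card (rcosets ?K) \<le> p"
    using card_rcosets_centralizer_le[OF fin x] derived card_center by simp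
  have "p * p ^ k = card (rcosets ?K) * card ?K"
    using lagrange[OF centralizer_subgroup] x ord by simp
  also have "\<dots> \<le> p * (card ?S * p)"
    using index card_centralizer_le[OF fin x] card_center by (intro mult_le_mono) simp_all
  finally have "p ^ k \<le> card ?S * p" using p0 by simp
  moreover have "p ^ k = p ^ (k - 1) * p" using k by (simp add: power_eq_if)
  ultimately have "p ^ (k - 1) * p \<le> card ?S * p" by simp
  then show ?thesis using p0 by simp
qed

lemma card_commuting_coset_pairs_extraspecial:
  assumes ex: "extraspecial p G" and ord: "order G = p ^ (k + 1)" and k: "k \<ge> 1"
  shows "card (commuting_coset_pairs G) = p ^ k + (p ^ k - 1) * p ^ (k - 1)"
proof -
  have fin: "finite (carrier G)" and p: "Factorial_Ring.prime p"
    and derived: "center G = derived G (carrier G)" and card_center: "card (center G) = p"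
    using ex unfolding extraspecial_def by auto
  have p0: "p > 0" using p prime_gt_0_nat by blast
  have "card (rcosets (center G)) * p = p ^ k * p"
    using lagrange[OF center_subgroup] ord card_center by (simp add: mult.commute)
  then have N: "card (rcosets (center G)) = p ^ k" using p0 by simp
  then have ordZ: "order (G Mod center G) = p ^ k" by (simp add: order_def FactGroup_def)
  have finZ: "finite (rcosets (center G))" using N p0 by (intro card_ge_0_finite) simp
  have fibre: "card (commuting_cosets G (center G #> x)) = p ^ (k - 1)"
    if "x \<in> carrier G" "x \<notin> center G" for x
    using card_commuting_cosets_le[OF p ordZ that] card_commuting_cosets_ge[OF fin p derived card_center ord k that(1)]
    by simp
  show ?thesis using card_commuting_coset_pairs_eq[OF finZ fibre] N by simp
qed

end

text \<open>An isoclinism transports commutation: if x, y correspond to x', y' modulo the centres, then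
  xy = yx iff x'y' = y'x', because \<beta> is injective and maps [x,y] to [x',y'].\<close>
lemma isoclinism_commute_iff:
  assumes G: "group G" and H: "group H"
    and \<beta>: "\<beta> \<in> iso (G\<lparr>carrier := derived G (carrier G)\<rparr>) (H\<lparr>carrier := derived H (carrier H)\<rparr>)"
    and x: "x \<in> carrier G" and y: "y \<in> carrier G" and x': "x' \<in> carrier H" and y': "y' \<in> carrier H"
    and commutators: "\<beta> (commutator G x y) = commutator H x' y'"
  shows "x \<otimes>\<^bsub>G\<^esub> y = y \<otimes>\<^bsub>G\<^esub> x \<longleftrightarrow> x' \<otimes>\<^bsub>H\<^esub> y' = y' \<otimes>\<^bsub>H\<^esub> x'"
proof -
  interpret G: group G by (rule G)
  interpret H: group H by (rule H)
  let ?G' = "G\<lparr>carrier := derived G (carrier G)\<rparr>" and ?H' = "H\<lparr>carrier := derived H (carrier H)\<rparr>"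
  have "group_hom ?G' ?H' \<beta>"
    using \<beta> subgroup.subgroup_is_group[OF G.derived_is_subgroup G]
      subgroup.subgroup_is_group[OF H.derived_is_subgroup H]
    by (simp add: group_hom_def group_hom_axioms_def iso_def)
  then have one: "\<beta> \<one>\<^bsub>G\<^esub> = \<one>\<^bsub>H\<^esub>" using group_hom.hom_one by fastforce
  have inj: "inj_on \<beta> (derived G (carrier G))" using \<beta> by (simp add: iso_def bij_betw_def)
  have "x \<otimes>\<^bsub>G\<^esub> y = y \<otimes>\<^bsub>G\<^esub> x \<longleftrightarrow> commutator G x y = \<one>\<^bsub>G\<^esub>"
    using G.commutator_eq_one_iff[OF x y] by simp
  also have "\<dots> \<longleftrightarrow> \<beta> (commutator G x y) = \<beta> \<one>\<^bsub>G\<^esub>"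
    using inj_on_eq_iff[OF inj G.commutator_in_derived[OF x y] subgroup.one_closed[OF G.derived_is_subgroup]]
    by simp
  also have "\<dots> \<longleftrightarrow> x' \<otimes>\<^bsub>H\<^esub> y' = y' \<otimes>\<^bsub>H\<^esub> x'"
    using commutators one H.commutator_eq_one_iff[OF x' y'] by simp
  finally show ?thesis .
qed

text \<open>Isoclinic groups have the same number of cosets of the centre and the same number of commuting
  coset pairs: \<alpha> \<times> \<alpha> maps the one set of pairs bijectively onto the other.\<close>
lemma isoclinic_card_commuting_coset_pairs:
  assumes G: "group G" and H: "group H" and iso: "isoclinic G H"
  shows "card (rcosets\<^bsub>G\<^esub> (center G)) = card (rcosets\<^bsub>H\<^esub> (center H))"
    and "card (commuting_coset_pairs G) = card (commuting_coset_pairs H)"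
proof -
  interpret G: group G by (rule G)
  interpret H: group H by (rule H)
  obtain \<alpha> \<beta> where \<alpha>: "\<alpha> \<in> iso (G Mod center G) (H Mod center H)"
    and \<beta>: "\<beta> \<in> iso (G\<lparr>carrier := derived G (carrier G)\<rparr>) (H\<lparr>carrier := derived H (carrier H)\<rparr>)"
    and rel: "\<And>x y x' y'. \<lbrakk>x \<in> carrier G; y \<in> carrier G; x' \<in> carrier H; y' \<in> carrier H;
          \<alpha> (center G #>\<^bsub>G\<^esub> x) = center H #>\<^bsub>H\<^esub> x'; \<alpha> (center G #>\<^bsub>G\<^esub> y) = center H #>\<^bsub>H\<^esub> y'\<rbrakk>
          \<Longrightarrow> \<beta> (commutator G x y) = commutator H x' y'"
    using iso unfolding isoclinic_def by blast
  let ?RG = "rcosets\<^bsub>G\<^esub> (center G)" and ?RH = "rcosets\<^bsub>H\<^esub> (center H)"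
  have bij: "bij_betw \<alpha> ?RG ?RH" using \<alpha> by (simp add: iso_def FactGroup_def)
  then show "card ?RG = card ?RH" by (rule bij_betw_same_card)
  have pairs: "(C, D) \<in> commuting_coset_pairs G \<longleftrightarrow> (\<alpha> C, \<alpha> D) \<in> commuting_coset_pairs H"
    if C: "C \<in> ?RG" and D: "D \<in> ?RG" for C D
  proof -
    obtain x y where x: "x \<in> carrier G" "C = center G #>\<^bsub>G\<^esub> x" and y: "y \<in> carrier G" "D = center G #>\<^bsub>G\<^esub> y"
      using C D unfolding RCOSETS_def by blast
    obtain x' y' where x': "x' \<in> carrier H" "\<alpha> C = center H #>\<^bsub>H\<^esub> x'"
      and y': "y' \<in> carrier H" "\<alpha> D = center H #>\<^bsub>H\<^esub> y'"
      using bij_betw_apply[OF bij C] bij_betw_apply[OF bij D] unfolding RCOSETS_def by blast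
    show ?thesis
      using G.commuting_coset_pairs_rcos_iff[OF x(1) y(1)] H.commuting_coset_pairs_rcos_iff[OF x'(1) y'(1)]
        isoclinism_commute_iff[OF G H \<beta> x(1) y(1) x'(1) y'(1) rel] x y x' y' by simp
  qed
  have "bij_betw (map_prod \<alpha> \<alpha>) {u \<in> ?RG \<times> ?RG. u \<in> commuting_coset_pairs G}
                                   {v \<in> ?RH \<times> ?RH. v \<in> commuting_coset_pairs H}"
    using bij_betw_map_prod[OF bij bij] pairs by (intro bij_betw_Collect) auto
  moreover have "commuting_coset_pairs G \<subseteq> ?RG \<times> ?RG" "commuting_coset_pairs H \<subseteq> ?RH \<times> ?RH"
    by (auto simp: commuting_coset_pairs_def commuting_cosets_def)
  ultimately show "card (commuting_coset_pairs G) = card (commuting_coset_pairs H)"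
    by (simp add: Int_absorb1 Int_def[symmetric] bij_betw_same_card)
qed

lemma closedin_sets_borel_of_top:
  assumes "closedin T A" shows "A \<in> sets (borel_of_top T)"
proof -
  have gen: "{U. openin T U} \<subseteq> Pow (topspace T)" using openin_subset by auto
  have "topspace T - A \<in> sigma_sets (topspace T) {U. openin T U}"
    using assms by (auto simp: closedin_def intro: sigma_sets.Basic)
  then have "topspace T - (topspace T - A) \<in> sigma_sets (topspace T) {U. openin T U}"
    by (rule sigma_sets.Compl)
  moreover have "topspace T - (topspace T - A) = A" using assms closedin_subset by blast
  ultimately show ?thesis unfolding borel_of_top_def using sets_measure_of[OF gen] by simp
qed

context group
begin

text \<open>Multiplication being continuous and T Hausdorff, the centre and hence each of its cosets is closed.\<close>
lemma rcos_center_closedin: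
  assumes cg: "compact_group G T" and C: "C \<in> rcosets (center G)"
  shows "closedin T C"
proof -
  have top: "topspace T = carrier G" and Haus: "Hausdorff_space T"
    and mult: "continuous_map (prod_topology T T) T (\<lambda>(x, y). x \<otimes> y)"
    using cg unfolding compact_group_def by auto
  have rmult: "continuous_map T T (\<lambda>z. z \<otimes> c)" if c: "c \<in> carrier G" for c
  proof -
    have "continuous_map T (prod_topology T T) (\<lambda>z. (id z, c))"
      by (rule continuous_map_pairedI) (use c top in auto)
    from continuous_map_compose[OF this mult] show ?thesis by (simp add: o_def)
  qed
  have lmult: "continuous_map T T (\<lambda>z. c \<otimes> z)" if c: "c \<in> carrier G" for c
  proof -
    have "continuous_map T (prod_topology T T) (\<lambda>z. (c, id z))"
      by (rule continuous_map_pairedI) (use c top in auto)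
    from continuous_map_compose[OF this mult] show ?thesis by (simp add: o_def)
  qed
  have "center G = (\<Inter>x \<in> carrier G. {z \<in> topspace T. z \<otimes> x = x \<otimes> z})"
    using top unfolding center_def by auto
  moreover have "closedin T {z \<in> topspace T. z \<otimes> x = x \<otimes> z}" if "x \<in> carrier G" for x
    by (rule closedin_continuous_maps_eq[OF Haus rmult[OF that] lmult[OF that]])
  ultimately have Z: "closedin T (center G)" by (auto intro: closedin_Inter)
  obtain a where a: "a \<in> carrier G" "C = center G #> a" using C unfolding RCOSETS_def by blast
  have "C = {y \<in> topspace T. y \<otimes> inv a \<in> center G}"
    using a subgroup.rcos_module[OF center_subgroup is_group a(1)] r_coset_subset_G[OF center_subset a(1)] top
    by auto
  then show ?thesis using closedin_continuous_map_preimage[OF rmult Z] a by simp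
qed

lemma measure_rcos_box:
  assumes cg: "compact_group G T" and hm: "haar_measure (G \<times>\<times> G) (prod_topology T T) \<nu>"
    and C: "C \<in> rcosets (center G)" and D: "D \<in> rcosets (center G)"
  shows "C \<times> D \<in> sets \<nu>" and "measure \<nu> (C \<times> D) = measure \<nu> (center G \<times> center G)"
proof -
  have sets: "sets \<nu> = sets (borel_of_top (prod_topology T T))"
    and inv: "\<And>g A. g \<in> carrier (G \<times>\<times> G) \<Longrightarrow> A \<in> sets \<nu> \<Longrightarrow>
                 measure \<nu> ((\<lambda>x. g \<otimes>\<^bsub>G \<times>\<times> G\<^esub> x) ` A) = measure \<nu> A"
    using hm unfolding haar_measure_def by auto
  have box: "C \<times> D \<in> sets \<nu>" if "C \<in> rcosets (center G)" "D \<in> rcosets (center G)" for C D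
    unfolding sets using rcos_center_closedin[OF cg] that
    by (intro closedin_sets_borel_of_top) (simp add: closedin_prod_Times_iff)
  then show "C \<times> D \<in> sets \<nu>" using C D .
  obtain a b where a: "a \<in> carrier G" "C = center G #> a" and b: "b \<in> carrier G" "D = center G #> b"
    using C D unfolding RCOSETS_def by blast
  have "(\<lambda>x. (a, b) \<otimes>\<^bsub>G \<times>\<times> G\<^esub> x) ` (center G \<times> center G) = (a <# center G) \<times> (b <# center G)"
    unfolding l_coset_def by (force simp: mult_DirProd')
  also have "\<dots> = C \<times> D" using a b l_coset_center by simp
  finally show "measure \<nu> (C \<times> D) = measure \<nu> (center G \<times> center G)"
    using inv[of "(a, b)" "center G \<times> center G"] a b box[OF center_in_rcosets center_in_rcosets] by simp
qed

lemma commuting_set_eq_Union: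
  "{(x, y) \<in> carrier G \<times> carrier G. x \<otimes> y = y \<otimes> x} = (\<Union>(C, D) \<in> commuting_coset_pairs G. C \<times> D)"
proof (intro equalityI subsetI)
  fix w assume "w \<in> {(x, y) \<in> carrier G \<times> carrier G. x \<otimes> y = y \<otimes> x}"
  then obtain x y where w: "w = (x, y)" "x \<in> carrier G" "y \<in> carrier G" "x \<otimes> y = y \<otimes> x" by blast
  then have "(center G #> x, center G #> y) \<in> commuting_coset_pairs G"
    using commuting_coset_pairs_rcos_iff by blast
  moreover have "w \<in> (center G #> x) \<times> (center G #> y)"
    using w rcos_self[OF _ center_subgroup] by simp
  ultimately show "w \<in> (\<Union>(C, D) \<in> commuting_coset_pairs G. C \<times> D)" by blast
next
  fix w assume "w \<in> (\<Union>(C, D) \<in> commuting_coset_pairs G. C \<times> D)"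
  then obtain C D where CD: "(C, D) \<in> commuting_coset_pairs G" "w \<in> C \<times> D" by auto
  then have "C \<subseteq> carrier G" "D \<subseteq> carrier G"
    using rcosets_center_subset unfolding commuting_coset_pairs_def commuting_cosets_def by auto
  then show "w \<in> {(x, y) \<in> carrier G \<times> carrier G. x \<otimes> y = y \<otimes> x}"
    using CD unfolding commuting_coset_pairs_def commuting_cosets_def by auto
qed

text \<open>Measure of a union of boxes: the boxes of distinct coset pairs are disjoint and equally large.\<close>
lemma measure_Union_rcos_boxes:
  assumes cg: "compact_group G T" and hm: "haar_measure (G \<times>\<times> G) (prod_topology T T) \<nu>"
    and fin: "finite (rcosets (center G))" and S: "S \<subseteq> (rcosets (center G)) \<times> (rcosets (center G))"
  shows "measure \<nu> (\<Union>(C, D) \<in> S. C \<times> D) = real (card S) * measure \<nu> (center G \<times> center G)"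
proof -
  have ps: "prob_space \<nu>" using hm unfolding haar_measure_def by blast
  have "disjoint_family_on (\<lambda>(C, D). C \<times> D) S"
    unfolding disjoint_family_on_def
  proof (intro ballI impI)
    fix u v assume "u \<in> S" "v \<in> S" "u \<noteq> v"
    moreover obtain C D C' D' where "u = (C, D)" "v = (C', D')" by fastforce
    ultimately have "C \<inter> C' = {} \<or> D \<inter> D' = {}" and "u = (C, D)" "v = (C', D')"
      using S rcos_disjoint[OF center_subgroup] unfolding pairwise_def disjnt_def by blast+
    then show "(case u of (C, D) \<Rightarrow> C \<times> D) \<inter> (case v of (C, D) \<Rightarrow> C \<times> D) = {}" by auto
  qed
  moreover have "emeasure \<nu> A \<noteq> \<infinity>" for A
    using prob_space.emeasure_le_1[OF ps, of A] by (auto simp: top_unique)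
  moreover have "finite S" using S fin by (simp add: finite_subset)
  moreover have "(\<lambda>(C, D). C \<times> D) ` S \<subseteq> sets \<nu>" using S measure_rcos_box(1)[OF cg hm] by auto
  ultimately have "measure \<nu> (\<Union>(C, D) \<in> S. C \<times> D) = (\<Sum>i \<in> S. measure \<nu> ((\<lambda>(C, D). C \<times> D) i))"
    by (intro measure_finite_Union)
  also have "\<dots> = (\<Sum>_ \<in> S. measure \<nu> (center G \<times> center G))"
    using S measure_rcos_box(2)[OF cg hm] by (intro sum.cong) (auto split: prod.split)
  finally show ?thesis by simp
qed

lemma comm_degree_eq_card_ratio:
  assumes cg: "compact_group G T" and hm: "haar_measure (G \<times>\<times> G) (prod_topology T T) \<nu>"
    and fin: "finite (rcosets (center G))"
  shows "comm_degree G \<nu> = real (card (commuting_coset_pairs G)) / real (card (rcosets (center G))) ^ 2"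
proof -
  let ?R = "rcosets (center G)" and ?m = "measure \<nu> (center G \<times> center G)"
  have "space \<nu> = carrier G \<times> carrier G" and ps: "prob_space \<nu>"
    using hm cg unfolding haar_measure_def compact_group_def by auto
  then have "1 = measure \<nu> (carrier G \<times> carrier G)" using prob_space.prob_space by metis
  also have "carrier G \<times> carrier G = (\<Union>(C, D) \<in> ?R \<times> ?R. C \<times> D)"
    using rcosets_part_G[OF center_subgroup] by blast
  finally have one: "real (card ?R) ^ 2 * ?m = 1"
    using measure_Union_rcos_boxes[OF cg hm fin, of "?R \<times> ?R"]
    by (simp add: card_cartesian_product power2_eq_square)
  then have "real (card ?R) ^ 2 \<noteq> 0" by (metis mult_zero_left zero_neq_one)
  then have "?m = (real (card ?R) ^ 2 * ?m) / real (card ?R) ^ 2" by simp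
  also have "\<dots> = 1 / real (card ?R) ^ 2" using one by simp
  finally have m: "?m = 1 / real (card ?R) ^ 2" .
  have "comm_degree G \<nu> = real (card (commuting_coset_pairs G)) * ?m"
    unfolding comm_degree_def commuting_set_eq_Union
    by (rule measure_Union_rcos_boxes[OF cg hm fin])
      (auto simp: commuting_coset_pairs_def commuting_cosets_def)
  then show ?thesis using m by simp
qed

end

text \<open>The count p^k + (p^k - 1) p^(k-1) of commuting pairs, divided by |G/Z|^2 = p^(2k).\<close>
lemma bound_arith:
  fixes p k :: nat
  assumes p: "p > 0" and k: "k \<ge> 1"
  shows "real (p ^ k + (p ^ k - 1) * p ^ (k - 1)) / (real p ^ k) ^ 2
           = (real p ^ k + real p - 1) / real p ^ (k + 1)"
proof -
  obtain j where j: "k = Suc j" using k by (cases k) auto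
  have "p ^ k \<ge> 1" using p by simp
  then have "real (p ^ k + (p ^ k - 1) * p ^ (k - 1)) = real p ^ k + (real p ^ k - 1) * real p ^ j"
    using j by (simp add: of_nat_diff)
  also have "\<dots> = real p ^ j * (real p ^ k + real p - 1)"
    using j by (simp add: algebra_simps)
  finally have num: "real (p ^ k + (p ^ k - 1) * p ^ (k - 1)) = real p ^ j * (real p ^ k + real p - 1)" .
  moreover have "(real p ^ k) ^ 2 = real p ^ j * real p ^ (k + 1)"
    using j by (simp add: power2_eq_square algebra_simps)
  ultimately show ?thesis using p by simp
qed

theorem proposition2p5:
  fixes G :: "('a, 'm) monoid_scheme" and T :: "'a topology"
    and \<nu> :: "('a \<times> 'a) measure" and H :: "('c, 'n) monoid_scheme"
    and p k :: nat
  assumes "compact_group G T"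
    and "Factorial_Ring.prime p" and "k \<ge> 2"
    and "order (G Mod center G) = p ^ k"
    and "haar_measure (G \<times>\<times> G) (prod_topology T T) \<nu>"
  shows "comm_degree G \<nu> \<le> (real p ^ k + real p - 1) / real p ^ (k + 1) \<and>
         (isoclinic G H \<and> extraspecial p H \<and> order H = p ^ (k + 1) \<longrightarrow>
            comm_degree G \<nu> = (real p ^ k + real p - 1) / real p ^ (k + 1))"
proof -
  note cg = assms(1) and p = assms(2) and ord = assms(4) and hm = assms(5)
  interpret group G using cg by (simp add: compact_group_def)
  have p0: "p > 0" and k: "k \<ge> 1" using p prime_gt_0_nat assms(3) by auto
  have N: "card (rcosets\<^bsub>G\<^esub> (center G)) = p ^ k" using ord by (simp add: order_def FactGroup_def)
  then have fin: "finite (rcosets\<^bsub>G\<^esub> (center G))" using p0 by (intro card_ge_0_finite) simp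
  let ?bound = "p ^ k + (p ^ k - 1) * p ^ (k - 1)"
  have degree: "comm_degree G \<nu> = real (card (commuting_coset_pairs G)) / (real p ^ k) ^ 2"
    using comm_degree_eq_card_ratio[OF cg hm fin] N by simp
  have "card (commuting_coset_pairs G) \<le> ?bound"
    using card_commuting_coset_pairs_le[OF fin card_commuting_cosets_le[OF p ord]] N by simp
  then have "real (card (commuting_coset_pairs G)) \<le> real ?bound" by (simp only: of_nat_le_iff)
  then have upper: "comm_degree G \<nu> \<le> (real p ^ k + real p - 1) / real p ^ (k + 1)"
    unfolding degree bound_arith[OF p0 k, symmetric] by (rule divide_right_mono) simp
  have "card (commuting_coset_pairs G) = ?bound"
    if iso: "isoclinic G H" and ex: "extraspecial p H" and oH: "order H = p ^ (k + 1)"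
  proof -
    interpret H: group H using ex by (simp add: extraspecial_def)
    show ?thesis
      using isoclinic_card_commuting_coset_pairs(2)[OF is_group H.is_group iso]
        H.card_commuting_coset_pairs_extraspecial[OF ex oH k] by simp
  qed
  then show ?thesis using upper degree bound_arith[OF p0 k] by auto
qed

end
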